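(* Let $\lambda=(\lambda_1,\dots,\lambda_I)$, $\mu=(\mu_1,\dots,\mu_J)$ be partitions of $n$ and $(T_t)_{t\ge0}$ the random transpositions chain on $\mathcal{T}_{\lambda,\mu}$. For $1\le i,k\le I$, $1\le j,l\le J$ and $\mathbf{x}\in\mathcal{T}_{\lambda,\mu}$: if $i\ne k$, $j\ne l$, \[ \mathbb{E}[T_1(i,j)T_1(k,l)\mid T_0=\mathbf{x}]=x_{ij}x_{kl}\left(1-\frac4n+\frac2{n^2}\right)+\frac2{n^2}\left(x_{kl}\lambda_i\mu_j+x_{ij}\lambda_k\mu_l+x_{il}x_{kj}\right); \] if $i\ne k$, $j=l$, \[ \mathbb{E}[T_1(i,j)T_1(k,j)\mid T_0=\mathbf{x}]=x_{ij}x_{kj}\left(1-\frac4n+\frac4{n^2}\right)+\frac2{n^2}\left(x_{kj}(\lambda_i\mu_j-\lambda_i)+x_{ij}(\lambda_k\mu_j-\lambda_k)\right); \] if $i=k$, $j=l$, \[ \mathbb{E}[T_1(i,j)^2\mid T_0=\mathbf{x}]=x_{ij}^2\left(1-\frac4n+\frac4{n^2}\right)+\frac2{n^2}\left(x_{ij}(2\lambda_i\mu_j-2\lambda_i-2\mu_j+n)+\lambda_i\mu_j\right). \]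
   Context: $\mathcal{T}_{\lambda,\mu}$ is the set of $I\times J$ nonnegative integer tables $\mathbf{x}=(x_{ij})$ with row sums $\lambda_i$ and column sums $\mu_j$; $T_t(i,j)$ is the $(i,j)$ entry at time $t$. The random transpositions chain: for $T'$ obtained from $T$ by subtracting $1$ at cells $(i_1,j_1),(i_2,j_2)$ and adding $1$ at $(i_1,j_2),(i_2,j_1)$ (with $i_1\ne i_2$, $j_1\ne j_2$), $P(T,T')=2T_{i_1j_1}T_{i_2j_2}/n^2$; $P(T,T)$ is the remaining mass. *)

theory Defs
  imports Complex_Main
begin

text \<open>A partition of n: a weakly decreasing list of positive parts summing to n.
  Rows/columns are indexed 0-based: lam ! i is the (i+1)-st part.\<close>
definition is_partition :: "nat \<Rightarrow> nat list \<Rightarrow> bool" where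
  "is_partition n lam \<longleftrightarrow> sum_list lam = n \<and> (\<forall>a\<in>set lam. 0 < a) \<and> sorted (rev lam)"

definition tables :: "nat list \<Rightarrow> nat list \<Rightarrow> (nat \<Rightarrow> nat \<Rightarrow> int) set" where
  "tables lam mu = {x. (\<forall>i j. 0 \<le> x i j)
      \<and> (\<forall>i j. (length lam \<le> i \<or> length mu \<le> j) \<longrightarrow> x i j = 0)
      \<and> (\<forall>i<length lam. (\<Sum>j<length mu. x i j) = int (lam ! i))
      \<and> (\<forall>j<length mu. (\<Sum>i<length lam. x i j) = int (mu ! j))}"

definition swap_move :: "(nat \<Rightarrow> nat \<Rightarrow> int) \<Rightarrow> nat \<Rightarrow> nat \<Rightarrow> nat \<Rightarrow> nat \<Rightarrow> nat \<Rightarrow> nat \<Rightarrow> int" where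
  "swap_move x i1 i2 j1 j2 = (\<lambda>i j. x i j
      - (if i = i1 \<and> j = j1 then 1 else 0) - (if i = i2 \<and> j = j2 then 1 else 0)
      + (if i = i1 \<and> j = j2 then 1 else 0) + (if i = i2 \<and> j = j1 then 1 else 0))"

text \<open>The move
  (i1,i2,j1,j2) and (i2,i1,j2,j1) are the same move, so we sum over i1 < i2 only
  (each distinct T' arises from exactly one such unordered move).\<close>
definition rt_off :: "nat \<Rightarrow> nat list \<Rightarrow> nat list \<Rightarrow> (nat \<Rightarrow> nat \<Rightarrow> int) \<Rightarrow> (nat \<Rightarrow> nat \<Rightarrow> int) \<Rightarrow> real" where
  "rt_off n lam mu x y =
     (\<Sum>(i1,i2,j1,j2) \<in> {(a,b,c,d). a < b \<and> b < length lam \<and> c < length mu \<and> d < length mu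
                              \<and> c \<noteq> d \<and> y = swap_move x a b c d}.
        2 * real_of_int (x i1 j1) * real_of_int (x i2 j2) / (real n)^2)"

definition rt_kernel :: "nat \<Rightarrow> nat list \<Rightarrow> nat list \<Rightarrow> (nat \<Rightarrow> nat \<Rightarrow> int) \<Rightarrow> (nat \<Rightarrow> nat \<Rightarrow> int) \<Rightarrow> real" where
  "rt_kernel n lam mu x y =
     (if y = x then 1 - (\<Sum>z \<in> tables lam mu - {x}. rt_off n lam mu x z)
      else rt_off n lam mu x y)"

definition rt_expect :: "nat \<Rightarrow> nat list \<Rightarrow> nat list \<Rightarrow> (nat \<Rightarrow> nat \<Rightarrow> int) \<Rightarrow> ((nat \<Rightarrow> nat \<Rightarrow> int) \<Rightarrow> real) \<Rightarrow> real" where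
  "rt_expect n lam mu x f = (\<Sum>y \<in> tables lam mu. rt_kernel n lam mu x y * f y)"

end

theory Submission
  imports Defs
begin

(* Started at x, E[f(T_1)] = f x + n^-2 * sum over all quadruples (a,b,c,d) of
   x_ac x_bd (f x' - f x), where x' is x after the move at (a,b,c,d): every move is counted
   twice, which absorbs the factor 2 of the kernel, and the degenerate quadruples (a = b or
   c = d) contribute nothing.  The move changes the entry (p,q) by
   d_pq = ([a=p] - [b=p]) ([d=q] - [c=q]), so T(p,q) T(r,s) changes by
   x_pq d_rs + x_rs d_pq + d_pq d_rs.  Weighted by x_ac x_bd, these indicator sums collapse to
   row sums, column sums and n, which yields one formula for E[T_1(p,q) T_1(r,s)]; the three
   cases of the theorem are its specialisations. *)

lemma sum_if_cond_const: "(\<Sum>b\<in>A. if P then f b else 0) = (if P then sum f A else 0)"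
  by simp

lemma if_one_mult_if_one: "(if A then 1 else 0) * (if B then 1 else 0) = (if A \<and> B then 1 else (0::'a::ring_1))"
  by simp

lemma mult_if_one: "y * (if A then 1 else 0) = (if A then y else (0::'a::ring_1))"
  by simp

lemmas sum_indicator_simps =
  if_if_eq_conj[symmetric] sum_if_cond_const sum.delta sum.delta' finite_lessThan lessThan_iff if_True

lemma tables_entry_le_row:
  assumes "x \<in> tables lam mu" "i < length lam"
  shows "x i j \<le> int (lam ! i)"
proof (cases "j < length mu")
  case True
  then have "x i j \<le> (\<Sum>j'<length mu. x i j')"
    using assms by (intro member_le_sum) (auto simp: tables_def)
  then show ?thesis using assms by (simp add: tables_def)
next
  case False
  then show ?thesis using assms by (simp add: tables_def)
qed

lemma finite_tables: "finite (tables lam mu)"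
proof -
  define Box where "Box = {..<length lam} \<times> {..<length mu}"
  define F where "F = {f. \<forall>p. (p \<in> Box \<longrightarrow> f p \<in> {0..int (sum_list lam)})
                            \<and> (p \<notin> Box \<longrightarrow> f p = (0::int))}"
  have "finite F"
    unfolding F_def Box_def by (intro finite_set_of_finite_funs) auto
  moreover have "case_prod x \<in> F" if x: "x \<in> tables lam mu" for x
  proof -
    have "x i j \<le> int (sum_list lam)" if "i < length lam" for i j
      using tables_entry_le_row[OF x that, of j] elem_le_sum_list[OF that] by linarith
    then show ?thesis using x by (auto simp: F_def Box_def tables_def)
  qed
  then have "tables lam mu \<subseteq> curry ` F"
    by (metis curry_case_prod image_eqI subsetI)
  ultimately show ?thesis by (rule finite_surj)
qed

lemma swap_move_in_tables:
  assumes x: "x \<in> tables lam mu"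
    and "a < length lam" "b < length lam" "c < length mu" "d < length mu"
    and "0 < x a c" "0 < x b d"
  shows "swap_move x a b c d \<in> tables lam mu"
  unfolding tables_def
proof (intro CollectI conjI allI impI)
  fix i j
  show "0 \<le> swap_move x a b c d i j"
    using x assms(6,7) by (auto simp: swap_move_def tables_def)
  show "length lam \<le> i \<or> length mu \<le> j \<Longrightarrow> swap_move x a b c d i j = 0"
    using x assms(2-5) by (auto simp: swap_move_def tables_def)
next
  fix i assume "i < length lam"
  then show "(\<Sum>j<length mu. swap_move x a b c d i j) = int (lam ! i)"
    using x assms(4,5) unfolding swap_move_def tables_def
    by (simp only: sum.distrib sum_subtractf sum_indicator_simps cong: if_cong) auto
next
  fix j assume "j < length mu"
  then show "(\<Sum>i<length lam. swap_move x a b c d i j) = int (mu ! j)"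
    using x assms(2,3) unfolding swap_move_def tables_def
    by (simp only: sum.distrib sum_subtractf sum_indicator_simps cong: if_cong) auto
qed

lemma swap_move_neq:
  assumes "a \<noteq> b" "c \<noteq> d"
  shows "swap_move x a b c d \<noteq> x"
proof
  assume "swap_move x a b c d = x"
  then have "swap_move x a b c d a c = x a c" by simp
  with assms show False by (simp add: swap_move_def)
qed

lemma swap_move_commute: "swap_move x b a d c = swap_move x a b c d"
  by (auto simp: swap_move_def fun_eq_iff)

lemma swap_move_same_row: "swap_move x a a c d = x"
  and swap_move_same_col: "swap_move x a b c c = x"
  by (auto simp: swap_move_def fun_eq_iff)

definition swap_moves :: "nat \<Rightarrow> nat \<Rightarrow> (nat \<times> nat \<times> nat \<times> nat) set" where
  "swap_moves I J = {(a,b,c,d). a < b \<and> b < I \<and> c < J \<and> d < J \<and> c \<noteq> d}"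

lemma finite_swap_moves: "finite (swap_moves I J)"
  by (rule finite_subset[of _ "{..<I} \<times> {..<I} \<times> {..<J} \<times> {..<J}"])
     (auto simp: swap_moves_def)

lemma rt_expect_eq_off_diagonal:
  assumes "x \<in> tables lam mu"
  shows "rt_expect n lam mu x f
       = f x + (\<Sum>y \<in> tables lam mu - {x}. rt_off n lam mu x y * (f y - f x))"
proof -
  have "rt_expect n lam mu x f
      = rt_kernel n lam mu x x * f x + (\<Sum>y \<in> tables lam mu - {x}. rt_kernel n lam mu x y * f y)"
    unfolding rt_expect_def using assms finite_tables by (simp add: sum.remove)
  then show ?thesis
    by (simp add: rt_kernel_def algebra_simps sum_subtractf sum_distrib_left sum_distrib_right)
qed

lemma sum_rt_off_eq_sum_moves:
  assumes x: "x \<in> tables lam mu"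
  shows "(\<Sum>y \<in> tables lam mu - {x}. rt_off n lam mu x y * g y)
       = (\<Sum>(a,b,c,d) \<in> swap_moves (length lam) (length mu).
            2 * real_of_int (x a c) * real_of_int (x b d) / (real n)^2 * g (swap_move x a b c d))"
proof -
  let ?T = "tables lam mu - {x}" and ?Mv = "swap_moves (length lam) (length mu)"
  define w where "w = (\<lambda>(a,b,c,d). 2 * real_of_int (x a c) * real_of_int (x b d) / (real n)^2)"
  define sw where "sw = (\<lambda>(a,b,c,d). swap_move x a b c d)"
  define Mv' where "Mv' = {m \<in> ?Mv. sw m \<in> ?T}"
  have "(\<Sum>y \<in> ?T. rt_off n lam mu x y * g y)
      = (\<Sum>y \<in> ?T. \<Sum>m \<in> {m \<in> Mv'. sw m = y}. w m * g (sw m))"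
  proof (rule sum.cong)
    fix y assume "y \<in> ?T"
    then have "{m \<in> Mv'. sw m = y} = {m \<in> ?Mv. sw m = y}" by (auto simp: Mv'_def)
    moreover have "rt_off n lam mu x y = sum w {m \<in> ?Mv. sw m = y}"
      unfolding rt_off_def w_def swap_moves_def sw_def by (rule sum.cong) auto
    ultimately show "rt_off n lam mu x y * g y = (\<Sum>m \<in> {m \<in> Mv'. sw m = y}. w m * g (sw m))"
      by (simp add: sum_distrib_right)
  qed simp
  also have "\<dots> = (\<Sum>m \<in> Mv'. w m * g (sw m))"
    using finite_swap_moves finite_tables
    by (intro sum.group) (auto simp: Mv'_def)
  also have "\<dots> = (\<Sum>m \<in> ?Mv. w m * g (sw m))"
  proof (rule sum.mono_neutral_left[OF finite_swap_moves])
    show "\<forall>m \<in> ?Mv - Mv'. w m * g (sw m) = 0"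
    proof
      fix m assume m: "m \<in> ?Mv - Mv'"
      obtain a b c d where m_eq: "m = (a,b,c,d)" by (cases m)
      have "w m = 0"
      proof (rule ccontr)
        assume "w m \<noteq> 0"
        then have "0 < x a c" "0 < x b d"
          using x by (auto simp: w_def m_eq tables_def order_le_less)
        then have "sw m \<in> ?T"
          using m x swap_move_in_tables swap_move_neq by (auto simp: sw_def m_eq swap_moves_def)
        then show False using m by (simp add: Mv'_def)
      qed
      then show "w m * g (sw m) = 0" by simp
    qed
  qed (auto simp: Mv'_def)
  finally show ?thesis by (simp add: w_def sw_def case_prod_unfold)
qed

lemma sum_quadruples_eq_twice_sum_moves:
  fixes G :: "nat \<Rightarrow> nat \<Rightarrow> nat \<Rightarrow> nat \<Rightarrow> 'a::comm_semiring_1"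
  assumes sym: "\<And>a b c d. G b a d c = G a b c d"
    and same_row: "\<And>a c d. G a a c d = 0" and same_col: "\<And>a b c. G a b c c = 0"
  shows "(\<Sum>a<I. \<Sum>b<I. \<Sum>c<J. \<Sum>d<J. G a b c d)
       = 2 * (\<Sum>(a,b,c,d) \<in> swap_moves I J. G a b c d)"
proof -
  define Box where "Box = {..<I} \<times> {..<I} \<times> {..<J} \<times> {..<J}"
  define A where "A = swap_moves I J"
  define B where "B = {(a,b,c,d). b < a \<and> a < I \<and> c < J \<and> d < J \<and> c \<noteq> d}"
  have "(\<Sum>a<I. \<Sum>b<I. \<Sum>c<J. \<Sum>d<J. G a b c d) = (\<Sum>(a,b,c,d) \<in> Box. G a b c d)"
    by (simp add: Box_def sum.cartesian_product)
  also have "\<dots> = (\<Sum>(a,b,c,d) \<in> A \<union> B. G a b c d)"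
  proof (rule sum.mono_neutral_right)
    show "\<forall>m \<in> Box - (A \<union> B). (case m of (a,b,c,d) \<Rightarrow> G a b c d) = 0"
    proof
      fix m assume "m \<in> Box - (A \<union> B)"
      then obtain a b c d where "m = (a,b,c,d)" "a = b \<or> c = d"
        by (cases m) (auto simp: Box_def A_def B_def swap_moves_def)
      then show "(case m of (a,b,c,d) \<Rightarrow> G a b c d) = 0" using same_row same_col by auto
    qed
  qed (auto simp: Box_def A_def B_def swap_moves_def)
  also have "\<dots> = (\<Sum>(a,b,c,d) \<in> A. G a b c d) + (\<Sum>(a,b,c,d) \<in> B. G a b c d)"
    by (rule sum.union_disjoint)
       (auto intro: finite_subset[of _ Box] simp: Box_def A_def B_def swap_moves_def)
  also have "(\<Sum>(a,b,c,d) \<in> B. G a b c d) = (\<Sum>(a,b,c,d) \<in> A. G a b c d)"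
    by (rule sum.reindex_bij_witness[where i="\<lambda>(a,b,c,d). (b,a,d,c)" and j="\<lambda>(a,b,c,d). (b,a,d,c)"])
       (auto simp: A_def B_def swap_moves_def sym)
  finally show ?thesis by (simp add: A_def mult_2)
qed

lemma rt_expect_eq_sum_quadruples:
  assumes "x \<in> tables lam mu"
  shows "rt_expect n lam mu x f = f x + 1 / (real n)^2 *
    (\<Sum>a<length lam. \<Sum>b<length lam. \<Sum>c<length mu. \<Sum>d<length mu.
       real_of_int (x a c) * real_of_int (x b d) * (f (swap_move x a b c d) - f x))"
proof -
  define G where "G a b c d = real_of_int (x a c) * real_of_int (x b d) * (f (swap_move x a b c d) - f x)"
    for a b c d
  have "(\<Sum>a<length lam. \<Sum>b<length lam. \<Sum>c<length mu. \<Sum>d<length mu. G a b c d)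
      = 2 * (\<Sum>(a,b,c,d) \<in> swap_moves (length lam) (length mu). G a b c d)"
    by (rule sum_quadruples_eq_twice_sum_moves)
       (auto simp: G_def swap_move_commute swap_move_same_row swap_move_same_col)
  moreover have "rt_expect n lam mu x f
      = f x + 2 / (real n)^2 * (\<Sum>(a,b,c,d) \<in> swap_moves (length lam) (length mu). G a b c d)"
    unfolding rt_expect_eq_off_diagonal[OF assms] sum_rt_off_eq_sum_moves[OF assms]
    by (simp add: G_def sum_distrib_left case_prod_unfold mult.assoc)
  ultimately show ?thesis by (simp add: G_def)
qed

definition swap_delta :: "nat \<Rightarrow> nat \<Rightarrow> nat \<Rightarrow> nat \<Rightarrow> nat \<Rightarrow> nat \<Rightarrow> 'a::ring_1" where
  "swap_delta a b c d p q = (if a = p \<and> d = q then 1 else 0) + (if b = p \<and> c = q then 1 else 0)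
     - (if a = p \<and> c = q then 1 else 0) - (if b = p \<and> d = q then 1 else 0)"

lemma of_int_swap_move:
  "of_int (swap_move x a b c d p q) = of_int (x p q) + (swap_delta a b c d p q :: 'a::ring_1)"
  by (simp add: swap_move_def swap_delta_def)

lemma sum_weighted_swap_delta:
  fixes x :: "nat \<Rightarrow> nat \<Rightarrow> 'a::comm_ring_1"
  assumes "p < I" "q < J"
  shows "(\<Sum>a<I. \<Sum>b<I. \<Sum>c<J. \<Sum>d<J. x a c * x b d * swap_delta a b c d p q)
       = 2 * (\<Sum>c<J. x p c) * (\<Sum>a<I. x a q) - 2 * x p q * (\<Sum>a<I. \<Sum>c<J. x a c)"
  using assms
  apply (simp only: swap_delta_def ring_distribs mult_if_one sum.distrib sum_subtractf)
  apply (simp only: sum_indicator_simps cong: if_cong)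
  apply (simp add: sum_distrib_left sum_distrib_right algebra_simps sum.swap[of _ "{..<J}"])
  done

lemma sum_weighted_swap_delta_mult:
  fixes x :: "nat \<Rightarrow> nat \<Rightarrow> 'a::comm_ring_1"
  assumes "p < I" "q < J" "r < I" "s < J"
  shows "(\<Sum>a<I. \<Sum>b<I. \<Sum>c<J. \<Sum>d<J.
           x a c * x b d * (swap_delta a b c d p q * swap_delta a b c d r s))
     = 2 * (if p = r \<and> q = s then x p q * (\<Sum>a<I. \<Sum>c<J. x a c) else 0)
       + 2 * x p q * x r s + 2 * x p s * x r q
       - 2 * (if p = r then x p q * (\<Sum>a<I. x a s) + x r s * (\<Sum>a<I. x a q) else 0)
       - 2 * (if q = s then x p q * (\<Sum>c<J. x r c) + x r s * (\<Sum>c<J. x p c) else 0)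
       + 2 * (if p = r \<and> q = s then (\<Sum>c<J. x p c) * (\<Sum>a<I. x a q) else 0)"
  using assms
  apply (simp only: swap_delta_def ring_distribs if_one_mult_if_one conj_assoc)
  apply (simp only: mult_if_one sum.distrib sum_subtractf)
  apply (simp only: sum_indicator_simps cong: if_cong)
  apply (cases "p = r"; cases "q = s")
     apply (simp_all add: sum_distrib_left sum_distrib_right algebra_simps)
  done

lemma tables_row_sum:
  assumes "x \<in> tables lam mu" "i < length lam"
  shows "(\<Sum>j<length mu. of_int (x i j)) = (of_nat (lam ! i) :: 'a::ring_1)"
  using assms unfolding of_int_sum[symmetric] by (simp add: tables_def)

lemma tables_col_sum:
  assumes "x \<in> tables lam mu" "j < length mu"
  shows "(\<Sum>i<length lam. of_int (x i j)) = (of_nat (mu ! j) :: 'a::ring_1)"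
  using assms unfolding of_int_sum[symmetric] by (simp add: tables_def)

lemma tables_total_sum:
  assumes "x \<in> tables lam mu"
  shows "(\<Sum>i<length lam. \<Sum>j<length mu. of_int (x i j)) = (of_nat (sum_list lam) :: 'a::ring_1)"
proof -
  have "(\<Sum>i<length lam. \<Sum>j<length mu. of_int (x i j))
      = (\<Sum>i<length lam. (of_nat (lam ! i) :: 'a))"
    using tables_row_sum[OF assms] by (intro sum.cong) simp_all
  then show ?thesis by (simp add: sum_list_sum_nth atLeast0LessThan)
qed

lemma rt_expect_entry_mult:
  assumes "sum_list lam = n" and x: "x \<in> tables lam mu"
    and pq: "p < length lam" "q < length mu" and rs: "r < length lam" "s < length mu"
  defines "X \<equiv> \<lambda>a b. real_of_int (x a b)"
    and "L \<equiv> \<lambda>a. real (lam ! a)" and "M \<equiv> \<lambda>b. real (mu ! b)" and "N \<equiv> real n"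
  shows "rt_expect n lam mu x (\<lambda>T. real_of_int (T p q) * real_of_int (T r s))
   = X p q * X r s * (1 - 4 / N + 2 / N^2)
     + 2 / N^2 * (X r s * L p * M q + X p q * L r * M s + X p s * X r q)
     + 2 / N^2 * ((if p = r \<and> q = s then X p q * N + L p * M q else 0)
                  - (if p = r then X p q * M s + X r s * M q else 0)
                  - (if q = s then X p q * L r + X r s * L p else 0))"
proof -
  have entry: "real_of_int (x a b) = X a b" for a b
    by (simp add: X_def)
  have row: "(\<Sum>c<length mu. X a c) = L a" if "a < length lam" for a
    using tables_row_sum[OF x that] by (simp add: X_def L_def)
  have col: "(\<Sum>a<length lam. X a c) = M c" if "c < length mu" for c
    using tables_col_sum[OF x that] by (simp add: X_def M_def)
  have total: "(\<Sum>a<length lam. \<Sum>c<length mu. X a c) = N"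
    using tables_total_sum[OF x] assms(1) by (simp add: X_def N_def)
  have swap: "real_of_int (swap_move x a b c d u v) = X u v + swap_delta a b c d u v" for a b c d u v
    by (simp add: of_int_swap_move X_def)
  have increment:
    "X a c * X b d * ((X p q + swap_delta a b c d p q) * (X r s + swap_delta a b c d r s) - X p q * X r s)
      = X p q * (X a c * X b d * swap_delta a b c d r s)
        + X r s * (X a c * X b d * swap_delta a b c d p q)
        + X a c * X b d * (swap_delta a b c d p q * swap_delta a b c d r s)" for a b c d
    by (simp add: algebra_simps)
  show ?thesis
    unfolding rt_expect_eq_sum_quadruples[OF x]
    apply (simp only: swap entry increment sum.distrib sum_distrib_left[symmetric])
    apply (simp only: sum_weighted_swap_delta[OF pq] sum_weighted_swap_delta[OF rs]
        sum_weighted_swap_delta_mult[OF pq rs] row col total pq rs N_def[symmetric])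
    \<comment> \<open>for N = 0 both sides are X p q * X r s, since division by 0 yields 0\<close>
    apply (cases "N = 0")
     apply (simp_all add: field_simps power2_eq_square)
    done
qed

theorem lemma3p4:
  fixes n :: nat and lam mu :: "nat list" and x :: "nat \<Rightarrow> nat \<Rightarrow> int"
    and i j k l :: nat
  assumes "is_partition n lam" and "is_partition n mu"
    and "i < length lam" and "k < length lam" and "j < length mu" and "l < length mu"
    and "x \<in> tables lam mu"
  defines "X \<equiv> \<lambda>a b. real_of_int (x a b)"
    and "L \<equiv> \<lambda>a. real (lam ! a)" and "M \<equiv> \<lambda>b. real (mu ! b)" and "N \<equiv> real n"
  shows
    "(i \<noteq> k \<and> j \<noteq> l \<longrightarrow>
       rt_expect n lam mu x (\<lambda>T. real_of_int (T i j) * real_of_int (T k l)) =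
         X i j * X k l * (1 - 4 / N + 2 / N^2)
         + 2 / N^2 * (X k l * L i * M j + X i j * L k * M l + X i l * X k j))
   \<and> (i \<noteq> k \<and> j = l \<longrightarrow>
       rt_expect n lam mu x (\<lambda>T. real_of_int (T i j) * real_of_int (T k j)) =
         X i j * X k j * (1 - 4 / N + 4 / N^2)
         + 2 / N^2 * (X k j * (L i * M j - L i) + X i j * (L k * M j - L k)))
   \<and> (i = k \<and> j = l \<longrightarrow>
       rt_expect n lam mu x (\<lambda>T. (real_of_int (T i j))^2) =
         (X i j)^2 * (1 - 4 / N + 4 / N^2)
         + 2 / N^2 * (X i j * (2 * L i * M j - 2 * L i - 2 * M j + N) + L i * M j))"
proof -
  have "sum_list lam = n"
    using assms(1) by (simp add: is_partition_def)
  from rt_expect_entry_mult[OF this assms(7,3,5,4,6)] show ?thesis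
    unfolding X_def L_def M_def N_def
    by (auto simp: power2_eq_square algebra_simps add_divide_distrib)
qed

end
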